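(* Let $n\geq 1$. Let $T_n$ be the set of triply rooted trees on $[n]=\{1,\dots,n\}$, and let $Q_n$ be the set of triples $(D,D',D'')$ of doubly rooted trees such that the vertex sets of $D$, $D'$, $D''$ form a composition of $[n]$ and $D$ is nonempty. Then there is a bijection between $Q_n$ and $T_n$.
   Context: A doubly rooted tree on a finite set $S$ is a labeled tree with vertex set $S$ together with two distinguished vertices $r_1$ (the first root) and $r_2$ (the second root), not necessarily distinct. A triply rooted tree on $S$ is a labeled tree with vertex set $S$ together with three distinguished vertices $r_1,r_2,r_3$ (first, second, third root), not necessarily distinct. The empty doubly rooted tree (on the empty vertex set) is allowed. A triple $(X,Y,Z)$ of subsets of a set $S$ is a composition of $S$ if $X,Y,Z$ are pairwise disjoint and $X\cup Y\cup Z=S$ (some of them may be empty). *)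

theory Defs
  imports Main
begin

definition edge_rel :: "'a set set \<Rightarrow> ('a \<times> 'a) set" where
  "edge_rel E = {(x, y). {x, y} \<in> E}"

definition is_graph :: "'a set \<Rightarrow> 'a set set \<Rightarrow> bool" where
  "is_graph V E \<longleftrightarrow> (\<forall>e\<in>E. \<exists>x y. e = {x, y} \<and> x \<noteq> y \<and> x \<in> V \<and> y \<in> V)"

definition connected_graph :: "'a set \<Rightarrow> 'a set set \<Rightarrow> bool" where
  "connected_graph V E \<longleftrightarrow> (\<forall>x\<in>V. \<forall>y\<in>V. (x, y) \<in> (edge_rel E)\<^sup>*)"

text \<open>Acyclic: no edge lies on a cycle, i.e. deleting an edge disconnects its endpoints.\<close>
definition acyclic_graph :: "'a set set \<Rightarrow> bool" where
  "acyclic_graph E \<longleftrightarrow> (\<forall>x y. {x, y} \<in> E \<longrightarrow> (x, y) \<notin> (edge_rel (E - {{x, y}}))\<^sup>*)"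

definition is_tree :: "'a set \<Rightarrow> 'a set set \<Rightarrow> bool" where
  "is_tree V E \<longleftrightarrow> finite V \<and> V \<noteq> {} \<and> is_graph V E \<and> connected_graph V E \<and> acyclic_graph E"

definition doubly_rooted_tree :: "'a set \<times> 'a set set \<times> ('a \<times> 'a) option \<Rightarrow> bool" where
  "doubly_rooted_tree D \<longleftrightarrow> (case D of (V, E, R) \<Rightarrow>
     (V = {} \<and> E = {} \<and> R = None) \<or>
     (is_tree V E \<and> (\<exists>r1 r2. R = Some (r1, r2) \<and> r1 \<in> V \<and> r2 \<in> V)))"

definition vertices :: "'a set \<times> 'a set set \<times> ('a \<times> 'a) option \<Rightarrow> 'a set" where
  "vertices D = fst D"

definition is_composition :: "'a set \<Rightarrow> 'a set \<Rightarrow> 'a set \<Rightarrow> 'a set \<Rightarrow> bool" where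
  "is_composition X Y Z S \<longleftrightarrow> X \<inter> Y = {} \<and> X \<inter> Z = {} \<and> Y \<inter> Z = {} \<and> X \<union> Y \<union> Z = S"

definition T :: "nat \<Rightarrow> (nat set set \<times> nat \<times> nat \<times> nat) set" where
  "T n = {(E, r1, r2, r3). is_tree {1..n} E \<and> r1 \<in> {1..n} \<and> r2 \<in> {1..n} \<and> r3 \<in> {1..n}}"

type_synonym drt = "nat set \<times> nat set set \<times> (nat \<times> nat) option"

definition Q :: "nat \<Rightarrow> (drt \<times> drt \<times> drt) set" where
  "Q n = {(D, D', D''). doubly_rooted_tree D \<and> doubly_rooted_tree D' \<and> doubly_rooted_tree D''
      \<and> is_composition (vertices D) (vertices D') (vertices D'') {1..n}
      \<and> vertices D \<noteq> {}}"

end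

theory Submission
  imports Defs
begin

text \<open>
  A triply rooted tree \<open>(G, r1, r2, r3)\<close> is cut at the median \<open>v\<close> of its roots, the vertex where
  the three paths between them meet. The component of \<open>G - v\<close> containing \<open>r1\<close> becomes a doubly
  rooted tree with roots \<open>r1\<close> and the neighbour of \<open>v\<close> towards \<open>r1\<close> (it is empty if \<open>r1 = v\<close>);
  likewise for \<open>r2\<close>, with the two roots in the opposite order. What remains is a tree containing
  \<open>v\<close> and \<open>r3\<close>, rooted at \<open>(v, r3)\<close>. Conversely, gluing joins the second root of \<open>D'\<close> and the
  first root of \<open>D''\<close> to the first root of \<open>D\<close>. The median is characterised by the property
  that no edge at it has two of the roots on its far side; in a glued tree the first root of \<open>D\<close>
  has this property, which is why the two constructions are mutually inverse.
\<close>

definition reachable :: "'a set set \<Rightarrow> 'a \<Rightarrow> 'a \<Rightarrow> bool" where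
  "reachable E x y \<longleftrightarrow> (x, y) \<in> (edge_rel E)\<^sup>*"

definition induced_edges :: "'a set set \<Rightarrow> 'a set \<Rightarrow> 'a set set" where
  "induced_edges E A = {e \<in> E. e \<subseteq> A}"

lemma reachable_refl [simp]: "reachable E x x"
  by (simp add: reachable_def)

lemma reachable_edge: "{x, y} \<in> E \<Longrightarrow> reachable E x y"
  by (auto simp: reachable_def edge_rel_def)

lemma reachable_trans: "reachable E x y \<Longrightarrow> reachable E y z \<Longrightarrow> reachable E x z"
  by (auto simp: reachable_def)

lemma reachable_sym: "reachable E x y \<Longrightarrow> reachable E y x"
proof -
  have "sym (edge_rel E)"
    by (auto simp: sym_def edge_rel_def insert_commute)
  then have "sym ((edge_rel E)\<^sup>*)"
    by (rule sym_rtrancl)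
  then show "reachable E x y \<Longrightarrow> reachable E y x"
    by (auto simp: reachable_def sym_def)
qed

lemma reachable_mono: "reachable E x y \<Longrightarrow> E \<subseteq> E' \<Longrightarrow> reachable E' x y"
proof -
  assume "E \<subseteq> E'"
  then have "edge_rel E \<subseteq> edge_rel E'"
    by (auto simp: edge_rel_def)
  then show "reachable E x y \<Longrightarrow> reachable E' x y"
    unfolding reachable_def using rtrancl_mono by blast
qed

lemma reachable_induct [consumes 1, case_names refl step]:
  assumes "reachable E x z" "P x"
    and "\<And>y z. reachable E x y \<Longrightarrow> {y, z} \<in> E \<Longrightarrow> P y \<Longrightarrow> P z"
  shows "P z"
  using assms(1) unfolding reachable_def
proof (induction rule: rtrancl_induct)
  case base
  then show ?case using assms(2) by simp
next
  case (step y z)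
  then show ?case using assms(3)[of y z] by (auto simp: reachable_def edge_rel_def)
qed

lemma reachable_closed:
  assumes "reachable E x z" "x \<in> A" "\<And>y z. {y, z} \<in> E \<Longrightarrow> y \<in> A \<Longrightarrow> z \<in> A"
  shows "z \<in> A"
  using assms(1) by (induction rule: reachable_induct) (use assms(2,3) in blast)+

lemma reachable_avoiding:
  assumes "reachable E x z" "c \<in> e" "\<not> reachable E x c"
  shows "reachable (E - {e}) x z"
  using assms(1)
proof (induction rule: reachable_induct)
  case refl
  then show ?case by simp
next
  case (step y z)
  have "reachable E x z"
    using step(1) reachable_edge[OF step(2)] reachable_trans by metis
  then have "{y, z} \<in> E - {e}"
    using step(1,2) assms(2,3) by auto
  then show ?case
    using step(3) reachable_edge reachable_trans by metis
qed

lemma reachable_via: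
  assumes "\<And>x. x \<in> V \<Longrightarrow> reachable E c x" "x \<in> V" "y \<in> V"
  shows "reachable E x y"
  using assms reachable_sym reachable_trans by metis

section \<open>Trees\<close>

lemma is_tree_reachable: "is_tree V E \<Longrightarrow> x \<in> V \<Longrightarrow> y \<in> V \<Longrightarrow> reachable E x y"
  unfolding is_tree_def connected_graph_def reachable_def by blast

lemma is_tree_edge_disconnects: "is_tree V E \<Longrightarrow> {x, y} \<in> E \<Longrightarrow> \<not> reachable (E - {{x, y}}) x y"
  unfolding is_tree_def acyclic_graph_def reachable_def by blast

lemma is_treeI:
  assumes "finite V" "V \<noteq> {}"
    and "\<And>e. e \<in> E \<Longrightarrow> \<exists>x y. e = {x, y} \<and> x \<noteq> y \<and> x \<in> V \<and> y \<in> V"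
    and "\<And>x y. x \<in> V \<Longrightarrow> y \<in> V \<Longrightarrow> reachable E x y"
    and "\<And>x y. {x, y} \<in> E \<Longrightarrow> \<not> reachable (E - {{x, y}}) x y"
  shows "is_tree V E"
  using assms unfolding is_tree_def is_graph_def connected_graph_def acyclic_graph_def reachable_def
  by blast

lemma is_tree_edgeE:
  assumes "is_tree V E" "e \<in> E"
  obtains x y where "e = {x, y}" "x \<noteq> y" "x \<in> V" "y \<in> V"
  using assms unfolding is_tree_def is_graph_def by blast

lemma is_tree_edge:
  assumes "is_tree V E" "{x, y} \<in> E"
  shows "x \<noteq> y" "x \<in> V" "y \<in> V"
  using is_tree_edgeE[OF assms] by (auto simp: doubleton_eq_iff)

lemma is_tree_edge_subset: "is_tree V E \<Longrightarrow> e \<in> E \<Longrightarrow> e \<subseteq> V \<and> e \<noteq> {}"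
  by (elim is_tree_edgeE) auto

lemma is_tree_reachable_in:
  assumes "is_tree V E" "reachable H x z" "x \<in> V" "H \<subseteq> E"
  shows "z \<in> V"
  using reachable_closed[OF assms(2,3)] is_tree_edge(3)[OF assms(1)] assms(4) by blast

lemma induced_edges_self: "is_tree V E \<Longrightarrow> induced_edges E V = E"
  using is_tree_edge_subset unfolding induced_edges_def by blast

lemma induced_edges_disjoint: "is_tree V E \<Longrightarrow> V \<inter> W = {} \<Longrightarrow> induced_edges E W = {}"
  using is_tree_edge_subset unfolding induced_edges_def by blast

lemma induced_edges_induced_edges: "V \<subseteq> W \<Longrightarrow> induced_edges (induced_edges E W) V = induced_edges E V"
  by (auto simp: induced_edges_def)

section \<open>The two sides of an edge\<close>

definition edge_side :: "'a set set \<Rightarrow> 'a \<Rightarrow> 'a \<Rightarrow> 'a set" where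
  "edge_side G w u = {z. reachable (G - {{w, u}}) u z}"

lemma mem_edge_side: "z \<in> edge_side G w u \<longleftrightarrow> reachable (G - {{w, u}}) u z"
  by (simp add: edge_side_def)

lemma edge_side_self: "u \<in> edge_side G w u"
  by (simp add: mem_edge_side)

lemma edge_side_extend:
  "y \<in> edge_side G w u \<Longrightarrow> {y, z} \<in> G - {{w, u}} \<Longrightarrow> z \<in> edge_side G w u"
  unfolding mem_edge_side using reachable_trans reachable_edge by metis

lemma edge_side_disjoint:
  assumes "is_tree S G" "{w, u} \<in> G"
  shows "edge_side G w u \<inter> edge_side G u w = {}"
proof (rule ccontr)
  assume "edge_side G w u \<inter> edge_side G u w \<noteq> {}"
  then obtain z where "reachable (G - {{w, u}}) u z" "reachable (G - {{w, u}}) w z"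
    by (auto simp: mem_edge_side insert_commute)
  then have "reachable (G - {{w, u}}) w u"
    using reachable_sym reachable_trans by metis
  then show False
    using is_tree_edge_disconnects[OF assms] by blast
qed

lemma edge_side_other_end:
  assumes "is_tree S G" "{w, u} \<in> G"
  shows "w \<notin> edge_side G w u"
  using edge_side_disjoint[OF assms] edge_side_self[of w G u] by blast

lemma edge_side_cover:
  assumes "is_tree S G" "{w, u} \<in> G" "z \<in> S"
  shows "z \<in> edge_side G w u \<or> z \<in> edge_side G u w"
proof -
  have "w \<in> S"
    using is_tree_edge[OF assms(1,2)] by blast
  then have "reachable G w z"
    using is_tree_reachable[OF assms(1)] assms(3) by blast
  then show ?thesis
  proof (induction rule: reachable_induct)
    case refl
    then show ?case using edge_side_self[of w G u] by blast
  next
    case (step y z)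
    show ?case
    proof (cases "{y, z} = {w, u}")
      case True
      then have "z = w \<or> z = u"
        by (auto simp: doubleton_eq_iff)
      then show ?thesis using edge_side_self by metis
    next
      case False
      then have "{y, z} \<in> G - {{w, u}}" "{y, z} \<in> G - {{u, w}}"
        using step(2) by (auto simp: insert_commute)
      then show ?thesis
        using step(3) edge_side_extend by metis
    qed
  qed
qed

lemma edge_side_subset:
  assumes "is_tree S G" "{w, u} \<in> G"
  shows "edge_side G w u \<subseteq> S"
  using is_tree_reachable_in[OF assms(1)] is_tree_edge(3)[OF assms]
  by (auto simp: mem_edge_side)

lemma edge_side_containing:
  assumes "is_tree S G" "w \<in> S" "z \<in> S" "z \<noteq> w"
  obtains u where "{w, u} \<in> G" "z \<in> edge_side G w u"
proof -
  have "reachable G w z"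
    using is_tree_reachable[OF assms(1-3)] .
  then have "z = w \<or> (\<exists>u. {w, u} \<in> G \<and> z \<in> edge_side G w u)"
  proof (induction rule: reachable_induct)
    case refl
    then show ?case by simp
  next
    case (step y z)
    from step(3) show ?case
    proof
      assume "y = w"
      then show ?thesis using step(2) edge_side_self[of z G w] by blast
    next
      assume "\<exists>u. {w, u} \<in> G \<and> y \<in> edge_side G w u"
      then obtain u where u: "{w, u} \<in> G" "y \<in> edge_side G w u"
        by blast
      show ?thesis
      proof (cases "{y, z} = {w, u}")
        case True
        then have "z = w \<or> z = u"
          by (auto simp: doubleton_eq_iff)
        then show ?thesis using u(1) edge_side_self[of u G w] by blast
      next
        case False
        then have "{y, z} \<in> G - {{w, u}}"
          using step(2) by auto
        then show ?thesis
          using u edge_side_extend by metis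
      qed
    qed
  qed
  then show ?thesis
    using assms(4) that by blast
qed

lemma edge_sides_at_vertex_disjoint:
  assumes t: "is_tree S G" and "{v, p} \<in> G" "{v, s} \<in> G" "p \<noteq> s"
  shows "edge_side G v p \<inter> edge_side G v s = {}"
proof (rule ccontr)
  assume "edge_side G v p \<inter> edge_side G v s \<noteq> {}"
  then obtain z where zp: "reachable (G - {{v, p}}) p z" and zs: "z \<in> edge_side G v s"
    by (auto simp: mem_edge_side)
  have "\<not> reachable (G - {{v, p}}) p v"
    using edge_side_other_end[OF t assms(2)] by (simp add: mem_edge_side)
  then have "reachable (G - {{v, p}} - {{v, s}}) p z"
    using reachable_avoiding[OF zp, of v "{v, s}"] by simp
  then have "reachable (G - {{s, v}}) p z"
    by (rule reachable_mono) (auto simp: insert_commute)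
  moreover have "reachable (G - {{s, v}}) v p"
    using assms by (intro reachable_edge) (auto simp: doubleton_eq_iff)
  ultimately have "z \<in> edge_side G s v"
    unfolding mem_edge_side by (rule reachable_trans[rotated])
  then show False
    using zs edge_side_disjoint[OF t assms(3)] by blast
qed

lemma edge_sides_facing_cover:
  assumes t: "is_tree S G" and u: "{w, u} \<in> G" "w' \<in> edge_side G w u"
    and u': "{w', u'} \<in> G" "w \<in> edge_side G w' u'" and z: "z \<in> S"
  shows "z \<in> edge_side G w u \<or> z \<in> edge_side G w' u'"
proof (cases "{w', u'} = {w, u}")
  case True
  moreover have "w' \<noteq> w"
    using u edge_side_other_end[OF t u(1)] by blast
  ultimately have "w' = u" "u' = w"
    by (auto simp: doubleton_eq_iff)
  then show ?thesis
    using edge_side_cover[OF t u(1) z] by simp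
next
  case False
  show ?thesis
  proof (cases "z \<in> edge_side G w u")
    case False
    then have "reachable (G - {{w, u}}) w z"
      using edge_side_cover[OF t u(1) z] by (simp add: mem_edge_side insert_commute)
    moreover have "\<not> reachable (G - {{w, u}}) w w'"
      using u(2) edge_side_disjoint[OF t u(1)] by (auto simp: mem_edge_side insert_commute)
    ultimately have "reachable (G - {{w, u}} - {{w', u'}}) w z"
      using reachable_avoiding[of "G - {{w, u}}" w z w' "{w', u'}"] by blast
    then have "reachable (G - {{w', u'}}) w z"
      by (rule reachable_mono) auto
    then have "z \<in> edge_side G w' u'"
      using u'(2) reachable_trans by (auto simp: mem_edge_side)
    then show ?thesis ..
  qed simp
qed

lemma edge_side_step_psubset:
  assumes t: "is_tree S G" and wu: "{w, u} \<in> G" and uu': "{u, u'} \<in> G" and "u' \<noteq> w"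
  shows "edge_side G u u' \<subset> edge_side G w u"
proof -
  have u: "u \<notin> edge_side G u u'"
    by (rule edge_side_other_end[OF t uu'])
  have "edge_side G u u' \<subseteq> edge_side G w u"
  proof
    fix z
    assume "z \<in> edge_side G u u'"
    then have z: "reachable (G - {{u, u'}}) u' z"
      by (simp add: mem_edge_side)
    have "\<not> reachable (G - {{u, u'}}) u' u"
      using u by (simp add: mem_edge_side)
    then have "reachable (G - {{u, u'}} - {{w, u}}) u' z"
      using reachable_avoiding[OF z, of u "{w, u}"] by simp
    then have "reachable (G - {{w, u}}) u' z"
      by (rule reachable_mono) auto
    moreover have "reachable (G - {{w, u}}) u u'"
      using assms is_tree_edge(1)[OF t wu] by (intro reachable_edge) (auto simp: doubleton_eq_iff)
    ultimately show "z \<in> edge_side G w u"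
      unfolding mem_edge_side by (rule reachable_trans[rotated])
  qed
  then show ?thesis
    using u edge_side_self[of u G w] by blast
qed

section \<open>Splitting along a bridge\<close>

locale bridge_split =
  fixes G :: "'a set set" and A B :: "'a set" and c d :: 'a
  assumes disjoint: "A \<inter> B = {}"
    and c_in: "c \<in> A" and d_in: "d \<in> B" and bridge: "{c, d} \<in> G"
    and edge_cases: "\<And>e. e \<in> G \<Longrightarrow> e \<subseteq> A \<or> e \<subseteq> B \<or> e = {c, d}"
begin

lemma swap: "bridge_split G B A d c"
  using disjoint c_in d_in bridge edge_cases by unfold_locales (auto simp: insert_commute)

lemma c_notin: "c \<notin> B" and d_notin: "d \<notin> A"
  using disjoint c_in d_in by auto

lemma edge_off_bridge:
  assumes "{y, z} \<in> G - {{c, d}}" "y \<in> A"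
  shows "{y, z} \<subseteq> A"
  using edge_cases[of "{y, z}"] assms disjoint by auto

lemma reachable_off_bridge_stays:
  assumes "reachable (G - {{c, d}}) x z" "x \<in> A"
  shows "z \<in> A"
  using reachable_closed[OF assms] edge_off_bridge by blast

lemma reachable_off_bridge_induced:
  assumes "reachable (G - {{c, d}}) x z" "x \<in> A"
  shows "reachable (induced_edges G A) x z"
  using assms(1)
proof (induction rule: reachable_induct)
  case refl
  then show ?case by simp
next
  case (step y z)
  have "{y, z} \<subseteq> A"
    using edge_off_bridge step(2) reachable_off_bridge_stays[OF step(1) assms(2)] by blast
  then have "{y, z} \<in> induced_edges G A"
    using step(2) by (simp add: induced_edges_def)
  then show ?case
    using step(3) reachable_edge reachable_trans by metis
qed

text \<open>Projecting a walk onto \<open>A\<close>: every excursion into \<open>B\<close> leaves and re-enters through \<open>c\<close>.\<close>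
lemma reachable_project:
  assumes "e0 \<subseteq> A" "reachable (G - {e0}) x z" "x \<in> A"
  shows "reachable (induced_edges G A - {e0}) x (if z \<in> A then z else c)"
  using assms(2)
proof (induction rule: reachable_induct)
  case refl
  then show ?case using assms(3) by simp
next
  case (step y z)
  have yz: "{y, z} \<in> G" "{y, z} \<noteq> e0"
    using step(2) by auto
  consider "{y, z} \<subseteq> A" | "{y, z} \<subseteq> B" | "{y, z} = {c, d}"
    using edge_cases[OF yz(1)] by blast
  then show ?case
  proof cases
    case 1
    then have "{y, z} \<in> induced_edges G A - {e0}"
      using yz by (simp add: induced_edges_def)
    moreover have "reachable (induced_edges G A - {e0}) x y"
      using 1 step(3) by simp
    ultimately have "reachable (induced_edges G A - {e0}) x z"
      by (metis reachable_trans reachable_edge)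
    then show ?thesis
      using 1 by simp
  next
    case 2
    then have "y \<notin> A" "z \<notin> A"
      using disjoint by auto
    then show ?thesis
      using step(3) by simp
  next
    case 3
    then show ?thesis
      using step(3) c_in d_notin by (auto simp: doubleton_eq_iff)
  qed
qed

lemma bridge_disconnects: "\<not> reachable (G - {{c, d}}) c d"
  using reachable_off_bridge_stays c_in d_notin by blast

lemma reachable_induced_left:
  assumes t: "is_tree (A \<union> B) G" and x: "x \<in> A"
  shows "reachable (induced_edges G A) c x"
proof -
  have "x \<notin> edge_side G c d"
  proof
    assume "x \<in> edge_side G c d"
    then have "reachable (G - {{d, c}}) d x"
      by (simp add: mem_edge_side insert_commute)
    then show False
      using bridge_split.reachable_off_bridge_stays[OF swap] d_in x disjoint by blast
  qed
  then have "reachable (G - {{c, d}}) c x"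
    using edge_side_cover[OF t bridge] x by (auto simp: mem_edge_side insert_commute)
  then show ?thesis
    using reachable_off_bridge_induced c_in by blast
qed

lemma is_tree_left:
  assumes t: "is_tree (A \<union> B) G"
  shows "is_tree A (induced_edges G A)"
proof (rule is_treeI)
  show "finite A" "A \<noteq> {}"
    using t c_in unfolding is_tree_def by auto
  show "\<exists>x y. e = {x, y} \<and> x \<noteq> y \<and> x \<in> A \<and> y \<in> A" if "e \<in> induced_edges G A" for e
  proof -
    have "e \<in> G" "e \<subseteq> A"
      using that by (auto simp: induced_edges_def)
    then show ?thesis
      by (elim is_tree_edgeE[OF t]) auto
  qed
  show "reachable (induced_edges G A) x y" if "x \<in> A" "y \<in> A" for x y
    using reachable_via[OF reachable_induced_left[OF t] that] .
  show "\<not> reachable (induced_edges G A - {{x, y}}) x y" if "{x, y} \<in> induced_edges G A" for x y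
  proof
    assume "reachable (induced_edges G A - {{x, y}}) x y"
    then have "reachable (G - {{x, y}}) x y"
      by (rule reachable_mono) (auto simp: induced_edges_def)
    then show False
      using that is_tree_edge_disconnects[OF t] by (auto simp: induced_edges_def)
  qed
qed

lemma is_tree_right: "is_tree (A \<union> B) G \<Longrightarrow> is_tree B (induced_edges G B)"
  using bridge_split.is_tree_left[OF swap] by (simp add: Un_commute)

lemma reachable_union:
  assumes tA: "is_tree A (induced_edges G A)" and tB: "is_tree B (induced_edges G B)"
    and x: "x \<in> A \<union> B"
  shows "reachable G c x"
proof -
  have induced_sub: "induced_edges G V \<subseteq> G" for V
    by (auto simp: induced_edges_def)
  show ?thesis
  proof (cases "x \<in> A")
    case True
    then show ?thesis
      using reachable_mono[OF is_tree_reachable[OF tA c_in] induced_sub] by blast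
  next
    case False
    then have "reachable G d x"
      using x reachable_mono[OF is_tree_reachable[OF tB d_in] induced_sub] by blast
    then show ?thesis
      using reachable_trans[OF reachable_edge[OF bridge]] by blast
  qed
qed

lemma edge_in_left_disconnects:
  assumes tA: "is_tree A (induced_edges G A)" and xy: "{x, y} \<in> G" "{x, y} \<subseteq> A"
  shows "\<not> reachable (G - {{x, y}}) x y"
proof
  assume "reachable (G - {{x, y}}) x y"
  moreover have "x \<in> A" "y \<in> A"
    using xy(2) by simp_all
  ultimately have "reachable (induced_edges G A - {{x, y}}) x y"
    using reachable_project[OF xy(2)] by fastforce
  then show False
    using xy is_tree_edge_disconnects[OF tA] by (simp add: induced_edges_def)
qed

lemma is_tree_union:
  assumes tA: "is_tree A (induced_edges G A)" and tB: "is_tree B (induced_edges G B)"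
  shows "is_tree (A \<union> B) G"
proof (rule is_treeI)
  show "finite (A \<union> B)" "A \<union> B \<noteq> {}"
    using tA tB c_in unfolding is_tree_def by simp_all
  show "\<exists>x y. e = {x, y} \<and> x \<noteq> y \<and> x \<in> A \<union> B \<and> y \<in> A \<union> B" if e: "e \<in> G" for e
  proof -
    consider "e \<in> induced_edges G A" | "e \<in> induced_edges G B" | "e = {c, d}"
      using edge_cases[OF e] e by (auto simp: induced_edges_def)
    then show ?thesis
    proof cases
      case 1
      then show ?thesis by (elim is_tree_edgeE[OF tA]) auto
    next
      case 2
      then show ?thesis by (elim is_tree_edgeE[OF tB]) auto
    qed (use c_in d_in c_notin in blast)
  qed
  show "reachable G x y" if "x \<in> A \<union> B" "y \<in> A \<union> B" for x y
    using reachable_via[OF reachable_union[OF tA tB] that] .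
  show "\<not> reachable (G - {{x, y}}) x y" if xy: "{x, y} \<in> G" for x y
  proof -
    consider "{x, y} \<subseteq> A" | "{x, y} \<subseteq> B" | "x = c \<and> y = d \<or> x = d \<and> y = c"
      using edge_cases[OF xy] by (auto simp: doubleton_eq_iff)
    then show ?thesis
    proof cases
      case 1
      then show ?thesis
        using edge_in_left_disconnects[OF tA xy] by blast
    next
      case 2
      then show ?thesis
        using bridge_split.edge_in_left_disconnects[OF swap tB xy] by blast
    next
      case 3
      then show ?thesis
        using bridge_disconnects reachable_sym[of "G - {{c, d}}" d c] by (auto simp: insert_commute)
    qed
  qed
qed

lemma edge_side_bridge:
  assumes tB: "is_tree B (induced_edges G B)"
  shows "edge_side G c d = B"
proof
  show "edge_side G c d \<subseteq> B"
    using bridge_split.reachable_off_bridge_stays[OF swap] d_in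
    by (auto simp: mem_edge_side insert_commute)
  have "induced_edges G B \<subseteq> G - {{c, d}}"
    using c_notin by (auto simp: induced_edges_def)
  then show "B \<subseteq> edge_side G c d"
    using reachable_mono[OF is_tree_reachable[OF tB d_in]] by (auto simp: mem_edge_side)
qed

lemma restrict_left:
  assumes "A' \<subseteq> A" "c \<in> A'"
  shows "bridge_split (induced_edges G (A' \<union> B)) A' B c d"
proof
  show "A' \<inter> B = {}" "c \<in> A'" "d \<in> B" "{c, d} \<in> induced_edges G (A' \<union> B)"
    using assms disjoint d_in bridge by (auto simp: induced_edges_def)
  fix e
  assume "e \<in> induced_edges G (A' \<union> B)"
  then have "e \<in> G" "e \<subseteq> A' \<union> B"
    by (auto simp: induced_edges_def)
  then show "e \<subseteq> A' \<or> e \<subseteq> B \<or> e = {c, d}"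
    using edge_cases disjoint by blast
qed

end

lemma bridge_split_edge_side:
  assumes t: "is_tree S G" and e: "{v, p} \<in> G"
  shows "bridge_split G (S - edge_side G v p) (edge_side G v p) v p"
proof
  show "(S - edge_side G v p) \<inter> edge_side G v p = {}" "{v, p} \<in> G" "p \<in> edge_side G v p"
    using e edge_side_self by auto
  show "v \<in> S - edge_side G v p"
    using is_tree_edge(2)[OF t e] edge_side_other_end[OF t e] by blast
  fix e'
  assume "e' \<in> G"
  then obtain x y where xy: "e' = {x, y}" "x \<in> S" "y \<in> S"
    using is_tree_edgeE[OF t] by metis
  show "e' \<subseteq> S - edge_side G v p \<or> e' \<subseteq> edge_side G v p \<or> e' = {v, p}"
  proof (cases "e' = {v, p}")
    case False
    then have "{x, y} \<in> G - {{v, p}}" "{y, x} \<in> G - {{v, p}}"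
      using \<open>e' \<in> G\<close> xy by (auto simp: insert_commute)
    then have "x \<in> edge_side G v p \<longleftrightarrow> y \<in> edge_side G v p"
      using edge_side_extend by metis
    then show ?thesis
      using xy by blast
  qed simp
qed

section \<open>Branches at a vertex\<close>

definition step_toward :: "'a set set \<Rightarrow> 'a \<Rightarrow> 'a \<Rightarrow> 'a" where
  "step_toward G v x = (SOME u. {v, u} \<in> G \<and> x \<in> edge_side G v u)"

text \<open>\<open>branch G v x\<close> is the vertex set of the component of \<open>G - v\<close> containing \<open>x\<close>.\<close>
definition branch :: "'a set set \<Rightarrow> 'a \<Rightarrow> 'a \<Rightarrow> 'a set" where
  "branch G v x = (if x = v then {} else edge_side G v (step_toward G v x))"

lemma step_toward:
  assumes "is_tree S G" "v \<in> S" "x \<in> S" "x \<noteq> v"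
  shows "{v, step_toward G v x} \<in> G" "x \<in> edge_side G v (step_toward G v x)"
proof -
  obtain u where "{v, u} \<in> G \<and> x \<in> edge_side G v u"
    using edge_side_containing[OF assms] by metis
  then have "{v, step_toward G v x} \<in> G \<and> x \<in> edge_side G v (step_toward G v x)"
    unfolding step_toward_def by (rule someI)
  then show "{v, step_toward G v x} \<in> G" "x \<in> edge_side G v (step_toward G v x)"
    by blast+
qed

lemma step_toward_eq:
  assumes t: "is_tree S G" and "{v, u} \<in> G" "x \<in> edge_side G v u"
  shows "step_toward G v x = u"
proof -
  have "{v, step_toward G v x} \<in> G \<and> x \<in> edge_side G v (step_toward G v x)"
    unfolding step_toward_def by (rule someI[of _ u]) (use assms in blast)
  then show ?thesis
    using edge_sides_at_vertex_disjoint[OF t] assms(2,3) by blast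
qed

lemma branch_eq_edge_side:
  assumes "is_tree S G" "{v, u} \<in> G" "x \<in> edge_side G v u"
  shows "branch G v x = edge_side G v u"
  using assms step_toward_eq edge_side_other_end unfolding branch_def by metis

context
  fixes S G v x
  assumes t: "is_tree S G" and v: "v \<in> S" and x: "x \<in> S"
begin

lemma center_notin_branch: "v \<notin> branch G v x"
  using edge_side_other_end[OF t step_toward(1)[OF t v x]] by (simp add: branch_def)

lemma branch_subset: "branch G v x \<subseteq> S"
  using edge_side_subset[OF t step_toward(1)[OF t v x]] by (simp add: branch_def)

lemma mem_branch: "x \<noteq> v \<Longrightarrow> x \<in> branch G v x"
  using step_toward(2)[OF t v x] by (simp add: branch_def)

lemma bridge_split_branch:
  "x \<noteq> v \<Longrightarrow> bridge_split G (S - branch G v x) (branch G v x) v (step_toward G v x)"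
  using bridge_split_edge_side[OF t step_toward(1)[OF t v x]] by (simp add: branch_def)

lemma branch_split_union: "(S - branch G v x) \<union> branch G v x = S"
  using branch_subset by blast

lemma is_tree_minus_branch: "is_tree (S - branch G v x) (induced_edges G (S - branch G v x))"
proof (cases "x = v")
  case True
  then show ?thesis
    using t induced_edges_self[OF t] by (simp add: branch_def)
next
  case False
  then show ?thesis
    using bridge_split.is_tree_left[OF bridge_split_branch] t branch_split_union by simp
qed

lemma is_tree_branch: "x \<noteq> v \<Longrightarrow> is_tree (branch G v x) (induced_edges G (branch G v x))"
  using bridge_split.is_tree_right[OF bridge_split_branch] t branch_split_union by simp

end

section \<open>The median of three vertices\<close>

definition root_count :: "'a \<Rightarrow> 'a \<Rightarrow> 'a \<Rightarrow> 'a set \<Rightarrow> nat" where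
  "root_count r1 r2 r3 A = length (filter (\<lambda>r. r \<in> A) [r1, r2, r3])"

text \<open>The paths between \<open>r1\<close>, \<open>r2\<close> and \<open>r3\<close> meet in a single vertex, the median; it is
  characterised by the fact that no edge side at it contains two of the (multi)set of roots.\<close>
definition is_median :: "'a set set \<Rightarrow> 'a set \<Rightarrow> 'a \<Rightarrow> 'a \<Rightarrow> 'a \<Rightarrow> 'a \<Rightarrow> bool" where
  "is_median G S r1 r2 r3 w \<longleftrightarrow>
     w \<in> S \<and> (\<forall>u. {w, u} \<in> G \<longrightarrow> root_count r1 r2 r3 (edge_side G w u) \<le> 1)"

definition median :: "'a set set \<Rightarrow> 'a set \<Rightarrow> 'a \<Rightarrow> 'a \<Rightarrow> 'a \<Rightarrow> 'a" where
  "median G S r1 r2 r3 = (SOME w. is_median G S r1 r2 r3 w)"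

lemma root_count_disjoint: "A \<inter> B = {} \<Longrightarrow> root_count r1 r2 r3 A + root_count r1 r2 r3 B \<le> 3"
  by (auto simp: root_count_def)

lemma root_count_cover:
  "{r1, r2, r3} \<subseteq> A \<union> B \<Longrightarrow> 3 \<le> root_count r1 r2 r3 A + root_count r1 r2 r3 B"
  by (auto simp: root_count_def)

lemma root_count_le_1:
  "root_count r1 r2 r3 A \<le> 1 \<longleftrightarrow> (r1 \<notin> A \<and> r2 \<notin> A) \<or> (r1 \<notin> A \<and> r3 \<notin> A) \<or> (r2 \<notin> A \<and> r3 \<notin> A)"
  by (auto simp: root_count_def)

lemma median_exists:
  assumes t: "is_tree S G" and r: "r1 \<in> S" "r2 \<in> S" "r3 \<in> S"
  shows "\<exists>w. is_median G S r1 r2 r3 w"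
proof -
  text \<open>Walk towards the side holding two roots; the sides shrink strictly.\<close>
  have descend: "\<exists>m. is_median G S r1 r2 r3 m"
    if "{w, u} \<in> G" "\<not> root_count r1 r2 r3 (edge_side G w u) \<le> 1" for w u
    using that
  proof (induction "card (edge_side G w u)" arbitrary: w u rule: less_induct)
    case less
    show ?case
    proof (cases "is_median G S r1 r2 r3 u")
      case False
      moreover have "u \<in> S"
        using is_tree_edge[OF t less.prems(1)] by blast
      ultimately obtain u' where u': "{u, u'} \<in> G" "\<not> root_count r1 r2 r3 (edge_side G u u') \<le> 1"
        unfolding is_median_def by blast
      have "u' \<noteq> w"
      proof
        assume "u' = w"
        then have "\<not> root_count r1 r2 r3 (edge_side G u w) \<le> 1"
          using u'(2) by simp
        then show False
          using root_count_disjoint[OF edge_side_disjoint[OF t less.prems(1)], of r1 r2 r3]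
            less.prems(2) by linarith
      qed
      then have "edge_side G u u' \<subset> edge_side G w u"
        by (rule edge_side_step_psubset[OF t less.prems(1) u'(1)])
      moreover have "finite (edge_side G w u)"
        using edge_side_subset[OF t less.prems(1)] t finite_subset unfolding is_tree_def by blast
      ultimately have "card (edge_side G u u') < card (edge_side G w u)"
        by (rule psubset_card_mono[rotated])
      then show ?thesis
        using less.hyps u' by blast
    qed blast
  qed
  show ?thesis
    using descend r unfolding is_median_def by blast
qed

lemma median_unique:
  assumes t: "is_tree S G" and r: "r1 \<in> S" "r2 \<in> S" "r3 \<in> S"
    and m: "is_median G S r1 r2 r3 w" and m': "is_median G S r1 r2 r3 w'"
  shows "w = w'"
proof (rule ccontr)
  assume ne: "w \<noteq> w'"
  have wS: "w \<in> S" "w' \<in> S"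
    using m m' by (auto simp: is_median_def)
  obtain u where u: "{w, u} \<in> G" "w' \<in> edge_side G w u"
    using edge_side_containing[OF t wS(1) wS(2)] ne by metis
  obtain u' where u': "{w', u'} \<in> G" "w \<in> edge_side G w' u'"
    using edge_side_containing[OF t wS(2) wS(1)] ne by metis
  have "z \<in> edge_side G w u \<or> z \<in> edge_side G w' u'" if "z \<in> S" for z
    using edge_sides_facing_cover[OF t u u' that] .
  then have "3 \<le> root_count r1 r2 r3 (edge_side G w u) + root_count r1 r2 r3 (edge_side G w' u')"
    using r by (intro root_count_cover) blast
  moreover have "root_count r1 r2 r3 (edge_side G w u) \<le> 1"
    using m u(1) by (simp add: is_median_def)
  moreover have "root_count r1 r2 r3 (edge_side G w' u') \<le> 1"
    using m' u'(1) by (simp add: is_median_def)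
  ultimately show False
    by linarith
qed

lemma is_median_median:
  assumes "is_tree S G" "r1 \<in> S" "r2 \<in> S" "r3 \<in> S"
  shows "is_median G S r1 r2 r3 (median G S r1 r2 r3)"
  unfolding median_def by (rule someI_ex) (rule median_exists[OF assms])

lemma median_eqI:
  assumes "is_tree S G" "r1 \<in> S" "r2 \<in> S" "r3 \<in> S" "is_median G S r1 r2 r3 w"
  shows "median G S r1 r2 r3 = w"
  using median_unique[OF assms(1-4) is_median_median[OF assms(1-4)] assms(5)] .

lemma median_branch_root_count:
  assumes t: "is_tree S G" and m: "is_median G S r1 r2 r3 v" and x: "x \<in> S"
  shows "root_count r1 r2 r3 (branch G v x) \<le> 1"
proof (cases "x = v")
  case True
  then show ?thesis by (simp add: branch_def root_count_def)
next
  case False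
  have "v \<in> S"
    using m by (simp add: is_median_def)
  then show ?thesis
    using m step_toward(1)[OF t _ x False] by (simp add: is_median_def branch_def False)
qed

lemma median_branches:
  assumes t: "is_tree S G" and r: "r1 \<in> S" "r2 \<in> S" "r3 \<in> S"
    and m: "is_median G S r1 r2 r3 v"
  shows "branch G v r1 \<inter> branch G v r2 = {}" "r3 \<notin> branch G v r1" "r3 \<notin> branch G v r2"
proof -
  have v: "v \<in> S"
    using m by (simp add: is_median_def)
  note count = median_branch_root_count[OF t m]
  show "r3 \<notin> branch G v r1" "r3 \<notin> branch G v r2"
    using count[OF r(1)] count[OF r(2)] mem_branch[OF t v r(1)] mem_branch[OF t v r(2)]
    by (auto simp: root_count_def branch_def split: if_splits)
  show "branch G v r1 \<inter> branch G v r2 = {}"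
  proof (cases "r1 = v \<or> r2 = v")
    case False
    then have "step_toward G v r1 \<noteq> step_toward G v r2"
      using count[OF r(1)] mem_branch[OF t v r(1)] mem_branch[OF t v r(2)]
      by (auto simp: root_count_def branch_def)
    then show ?thesis
      using False edge_sides_at_vertex_disjoint[OF t] step_toward(1)[OF t v] r
      by (simp add: branch_def)
  qed (auto simp: branch_def)
qed

section \<open>Pendant doubly rooted trees\<close>

type_synonym 'a doubly_rooted = "'a set \<times> 'a set set \<times> ('a \<times> 'a) option"

fun reverse_roots :: "'a doubly_rooted \<Rightarrow> 'a doubly_rooted" where
  "reverse_roots (V, E, R) = (V, E, map_option prod.swap R)"

text \<open>Hanging \<open>(V, E, Some (x, y))\<close> below \<open>a\<close> joins its second root \<open>y\<close> to \<open>a\<close>; its first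
  root \<open>x\<close> is then the far end of the hanging tree as seen from \<open>a\<close>.\<close>
fun hang_edges :: "'a \<Rightarrow> 'a doubly_rooted \<Rightarrow> 'a set set" where
  "hang_edges a (V, E, None) = E"
| "hang_edges a (V, E, Some (x, y)) = insert {a, y} E"

fun far_root :: "'a \<Rightarrow> 'a doubly_rooted \<Rightarrow> 'a" where
  "far_root a (V, E, None) = a"
| "far_root a (V, E, Some (x, y)) = x"

definition pendant :: "'a set set \<Rightarrow> 'a \<Rightarrow> 'a \<Rightarrow> 'a doubly_rooted" where
  "pendant G v x = (if x = v then ({}, {}, None)
     else (branch G v x, induced_edges G (branch G v x), Some (x, step_toward G v x)))"

lemma reverse_roots_reverse_roots [simp]: "reverse_roots (reverse_roots D) = D"
  by (cases D) (simp add: option.map_comp option.map_id)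

lemma vertices_eq [simp]: "vertices (V, E, R) = V"
  by (simp add: vertices_def)

lemma vertices_reverse_roots [simp]: "vertices (reverse_roots D) = vertices D"
  by (cases D) simp

lemma doubly_rooted_tree_reverse_roots [simp]:
  "doubly_rooted_tree (reverse_roots D) \<longleftrightarrow> doubly_rooted_tree D"
  by (cases D) (auto simp: doubly_rooted_tree_def)

lemma doubly_rooted_treeE:
  assumes "doubly_rooted_tree (V, E, R)"
  obtains "V = {}" "E = {}" "R = None"
    | x y where "R = Some (x, y)" "x \<in> V" "y \<in> V" "is_tree V E"
  using assms unfolding doubly_rooted_tree_def by auto

lemma far_root_mem: "doubly_rooted_tree (V, E, R) \<Longrightarrow> far_root a (V, E, R) \<in> insert a V"
  by (elim doubly_rooted_treeE) auto

lemma far_root_pendant [simp]: "far_root v (pendant G v x) = x"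
  by (simp add: pendant_def)

lemma vertices_pendant [simp]: "vertices (pendant G v x) = branch G v x"
  by (simp add: pendant_def branch_def)

lemma hang_edges_pendant:
  "hang_edges v (pendant G v x) =
     (if x = v then {} else insert {v, step_toward G v x} (induced_edges G (branch G v x)))"
  by (simp add: pendant_def)

context
  fixes S G v x
  assumes t: "is_tree S G" and v: "v \<in> S" and x: "x \<in> S"
begin

lemma doubly_rooted_tree_pendant: "doubly_rooted_tree (pendant G v x)"
  using is_tree_branch[OF t v x] mem_branch[OF t v x] step_toward[OF t v x]
  by (auto simp: pendant_def doubly_rooted_tree_def branch_def edge_side_self)

lemma hang_edges_pendant_subset: "hang_edges v (pendant G v x) \<subseteq> G"
  using step_toward(1)[OF t v x] by (auto simp: hang_edges_pendant induced_edges_def)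

lemma edge_cases_branch:
  assumes "e \<in> G"
  shows "e \<subseteq> S - branch G v x \<or> e \<in> hang_edges v (pendant G v x)"
proof (cases "x = v")
  case True
  then show ?thesis
    using is_tree_edge_subset[OF t assms] by (simp add: branch_def)
next
  case False
  then show ?thesis
    using bridge_split.edge_cases[OF bridge_split_branch[OF t v x False] assms] assms
    by (auto simp: hang_edges_pendant induced_edges_def)
qed

end

lemma hang_doubly_rooted_tree:
  assumes tA: "is_tree A GA" and c: "c \<in> A" and D: "doubly_rooted_tree (V, E, R)"
    and disj: "A \<inter> V = {}"
  defines "G \<equiv> GA \<union> hang_edges c (V, E, R)"
  shows "is_tree (A \<union> V) G" "induced_edges G A = GA" "induced_edges G V = E"
    and "R = Some (x, y) \<Longrightarrow> {c, y} \<in> G \<and> edge_side G c y = V"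
proof -
  have "is_tree (A \<union> V) G \<and> induced_edges G A = GA \<and> induced_edges G V = E \<and>
    (\<forall>x y. R = Some (x, y) \<longrightarrow> {c, y} \<in> G \<and> edge_side G c y = V)"
    using D
  proof (cases rule: doubly_rooted_treeE)
    case 1
    then show ?thesis
      using tA induced_edges_self[OF tA] induced_edges_disjoint[OF tA] by (simp add: G_def)
  next
    case (2 x' y')
    have G: "G = insert {c, y'} (GA \<union> E)"
      using 2 by (simp add: G_def)
    have y'A: "y' \<notin> A"
      using 2 disj by blast
    have cV: "c \<notin> V"
      using c disj by blast
    have induced_A: "induced_edges G A = GA"
      using y'A induced_edges_self[OF tA] induced_edges_disjoint[OF 2(4)] disj
      by (auto simp: G induced_edges_def)
    have induced_V: "induced_edges G V = E"
      using cV induced_edges_self[OF 2(4)] induced_edges_disjoint[OF tA disj]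
      by (auto simp: G induced_edges_def)
    interpret bridge_split G A V c y'
      using disj c 2(3) is_tree_edge_subset[OF tA] is_tree_edge_subset[OF 2(4)]
      by unfold_locales (auto simp: G)
    show ?thesis
      using is_tree_union edge_side_bridge bridge induced_A induced_V tA 2 by auto
  qed
  then show "is_tree (A \<union> V) G" "induced_edges G A = GA" "induced_edges G V = E"
    "R = Some (x, y) \<Longrightarrow> {c, y} \<in> G \<and> edge_side G c y = V"
    by blast+
qed

lemma pendant_far_root:
  assumes t: "is_tree S G" and D: "doubly_rooted_tree (V, E, R)" and c: "c \<notin> V"
    and induced: "induced_edges G V = E"
    and hung: "\<And>x y. R = Some (x, y) \<Longrightarrow> {c, y} \<in> G \<and> edge_side G c y = V"
  shows "pendant G c (far_root c (V, E, R)) = (V, E, R)"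
  using D
proof (cases rule: doubly_rooted_treeE)
  case 1
  then show ?thesis by (simp add: pendant_def)
next
  case (2 x y)
  have "x \<noteq> c" "step_toward G c x = y" "branch G c x = V"
    using 2 c hung[OF 2(1)] step_toward_eq[OF t] branch_eq_edge_side[OF t] by auto
  then show ?thesis
    using 2(1) induced by (simp add: pendant_def)
qed

lemma hang_two_doubly_rooted_trees:
  assumes tX: "is_tree X E" and a: "a \<in> X"
    and D1: "doubly_rooted_tree (Y, E1, R1)" and D2: "doubly_rooted_tree (Z, E2, R2)"
    and disj: "X \<inter> Y = {}" "X \<inter> Z = {}" "Y \<inter> Z = {}"
  defines "G \<equiv> E \<union> hang_edges a (Y, E1, R1) \<union> hang_edges a (Z, E2, R2)"
  shows "is_tree (X \<union> Y \<union> Z) G" "induced_edges G X = E" "induced_edges G Y = E1"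
    and "R1 = Some (x, y) \<Longrightarrow> {a, y} \<in> G \<and> edge_side G a y = Y"
proof -
  define H where "H \<equiv> E \<union> hang_edges a (Z, E2, R2)"
  note H = hang_doubly_rooted_tree[OF tX a D2 disj(2), folded H_def]
  have G: "G = H \<union> hang_edges a (Y, E1, R1)"
    by (auto simp: G_def H_def)
  have "a \<in> X \<union> Z" "(X \<union> Z) \<inter> Y = {}"
    using a disj by auto
  note GH = hang_doubly_rooted_tree[OF H(1) this(1) D1 this(2), folded G]
  show "is_tree (X \<union> Y \<union> Z) G"
    using GH(1) by (simp add: Un_ac)
  show "induced_edges G X = E"
    using induced_edges_induced_edges[of X "X \<union> Z" G] GH(2) H(2) by simp
  show "induced_edges G Y = E1" "R1 = Some (x, y) \<Longrightarrow> {a, y} \<in> G \<and> edge_side G a y = Y"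
    using GH(3,4) by blast+
qed

lemma far_root_edge_side:
  assumes t: "is_tree S G" and au: "{a, u} \<in> G" and D: "doubly_rooted_tree (V, E, R)"
    and hung: "\<And>x y. R = Some (x, y) \<Longrightarrow> {a, y} \<in> G \<and> edge_side G a y = V"
  shows "far_root a (V, E, R) \<notin> edge_side G a u \<or> edge_side G a u = V"
  using D
proof (cases rule: doubly_rooted_treeE)
  case 1
  then show ?thesis
    using edge_side_other_end[OF t au] by simp
next
  case (2 x y)
  then show ?thesis
    using hung[OF 2(1)] edge_sides_at_vertex_disjoint[OF t au, of y] by auto
qed

section \<open>Gluing and splitting\<close>

fun glue ::
  "'a doubly_rooted \<times> 'a doubly_rooted \<times> 'a doubly_rooted \<Rightarrow> 'a set set \<times> 'a \<times> 'a \<times> 'a"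
where
  "glue ((X, E, Some (a, b)), D1, D2) =
     (E \<union> hang_edges a D1 \<union> hang_edges a (reverse_roots D2),
      far_root a D1, far_root a (reverse_roots D2), b)"

fun split_at_median ::
  "'a set \<Rightarrow> 'a set set \<times> 'a \<times> 'a \<times> 'a \<Rightarrow> 'a doubly_rooted \<times> 'a doubly_rooted \<times> 'a doubly_rooted"
where
  "split_at_median S (G, r1, r2, r3) =
     (let v = median G S r1 r2 r3; X = S - branch G v r1 - branch G v r2
      in ((X, induced_edges G X, Some (v, r3)), pendant G v r1, reverse_roots (pendant G v r2)))"

context
  fixes X E a b Y E1 R1 Z E2 R2 G
  assumes tX: "is_tree X E" and a: "a \<in> X" and b: "b \<in> X"
    and D1: "doubly_rooted_tree (Y, E1, R1)" and D2: "doubly_rooted_tree (Z, E2, R2)"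
    and disj: "X \<inter> Y = {}" "X \<inter> Z = {}" "Y \<inter> Z = {}"
    and G: "G = E \<union> hang_edges a (Y, E1, R1) \<union> hang_edges a (Z, E2, R2)"
begin

lemma glued_structure:
  shows "is_tree (X \<union> Y \<union> Z) G" "induced_edges G X = E"
    and "induced_edges G Y = E1" "R1 = Some (x, y) \<Longrightarrow> {a, y} \<in> G \<and> edge_side G a y = Y"
    and "induced_edges G Z = E2" "R2 = Some (x, y) \<Longrightarrow> {a, y} \<in> G \<and> edge_side G a y = Z"
proof -
  have G': "G = E \<union> hang_edges a (Z, E2, R2) \<union> hang_edges a (Y, E1, R1)"
    by (auto simp: G)
  have disj': "Z \<inter> Y = {}"
    using disj by blast
  note H1 = hang_two_doubly_rooted_trees[OF tX a D1 D2 disj, folded G]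
  note H2 = hang_two_doubly_rooted_trees[OF tX a D2 D1 disj(2,1) disj', folded G']
  show "is_tree (X \<union> Y \<union> Z) G" "induced_edges G X = E" "induced_edges G Y = E1"
    "R1 = Some (x, y) \<Longrightarrow> {a, y} \<in> G \<and> edge_side G a y = Y"
    "induced_edges G Z = E2" "R2 = Some (x, y) \<Longrightarrow> {a, y} \<in> G \<and> edge_side G a y = Z"
    using H1 H2 by blast+
qed

lemma glued_median: "is_median G (X \<union> Y \<union> Z) (far_root a (Y, E1, R1)) (far_root a (Z, E2, R2)) b a"
  unfolding is_median_def
proof (intro conjI allI impI)
  show "a \<in> X \<union> Y \<union> Z"
    using a by blast
  fix u
  assume au: "{a, u} \<in> G"
  note t = glued_structure(1)
  let ?s = "edge_side G a u"
  have hung: "\<And>x y. R1 = Some (x, y) \<Longrightarrow> {a, y} \<in> G \<and> edge_side G a y = Y"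
    "\<And>x y. R2 = Some (x, y) \<Longrightarrow> {a, y} \<in> G \<and> edge_side G a y = Z"
    using glued_structure(4,6) by blast+
  have "far_root a (Y, E1, R1) \<notin> ?s \<or> ?s = Y"
    by (rule far_root_edge_side[OF t au D1]) (erule hung(1))
  moreover have "far_root a (Z, E2, R2) \<notin> ?s \<or> ?s = Z"
    by (rule far_root_edge_side[OF t au D2]) (erule hung(2))
  moreover have "far_root a (Y, E1, R1) \<in> insert a Y" "far_root a (Z, E2, R2) \<in> insert a Z"
    using far_root_mem[OF D1] far_root_mem[OF D2] by blast+
  moreover have "a \<notin> ?s"
    by (rule edge_side_other_end[OF t au])
  ultimately show "root_count (far_root a (Y, E1, R1)) (far_root a (Z, E2, R2)) b ?s \<le> 1"
    unfolding root_count_le_1 using b disj by blast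
qed

lemma split_at_median_glued:
  "split_at_median (X \<union> Y \<union> Z) (G, far_root a (Y, E1, R1), far_root a (Z, E2, R2), b) =
     ((X, E, Some (a, b)), (Y, E1, R1), reverse_roots (Z, E2, R2))"
proof -
  let ?S = "X \<union> Y \<union> Z" and ?r1 = "far_root a (Y, E1, R1)" and ?r2 = "far_root a (Z, E2, R2)"
  note t = glued_structure(1)
  have roots: "?r1 \<in> ?S" "?r2 \<in> ?S" "b \<in> ?S"
    using far_root_mem[OF D1, of a] far_root_mem[OF D2, of a] a b by auto
  have "median G ?S ?r1 ?r2 b = a"
    by (rule median_eqI[OF t roots glued_median])
  moreover have "pendant G a ?r1 = (Y, E1, R1)" "pendant G a ?r2 = (Z, E2, R2)"
    using pendant_far_root[OF t D1] pendant_far_root[OF t D2] a disj glued_structure(3-6) by blast+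
  moreover have "branch G a ?r1 = Y" "branch G a ?r2 = Z"
    using vertices_pendant[of G a ?r1] vertices_pendant[of G a ?r2] calculation(2,3)
    by (simp_all add: vertices_def)
  moreover have "?S - Y - Z = X"
    using disj by blast
  ultimately show ?thesis
    using glued_structure(2) by simp
qed

end

lemma is_tree_split_center:
  assumes t: "is_tree S G" and r: "r1 \<in> S" "r2 \<in> S" "r3 \<in> S"
    and m: "is_median G S r1 r2 r3 v"
  defines "X \<equiv> S - branch G v r1 - branch G v r2"
  shows "is_tree X (induced_edges G X)"
proof -
  have v: "v \<in> S"
    using m by (simp add: is_median_def)
  note branches_disjoint = median_branches(1)[OF t r m]
  show ?thesis
  proof (cases "r2 = v")
    case True
    then show ?thesis
      using is_tree_minus_branch[OF t v r(1)] by (simp add: X_def branch_def)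
  next
    case False
    interpret bridge_split G "S - branch G v r2" "branch G v r2" v "step_toward G v r2"
      by (rule bridge_split_branch[OF t v r(2) False])
    have "v \<in> X"
      using v center_notin_branch[OF t v r(1)] center_notin_branch[OF t v r(2)] by (simp add: X_def)
    then interpret X: bridge_split "induced_edges G (X \<union> branch G v r2)" X "branch G v r2"
      v "step_toward G v r2"
      by (intro restrict_left) (auto simp: X_def)
    have "X \<union> branch G v r2 = S - branch G v r1"
      using branches_disjoint branch_subset[OF t v r(2)] by (auto simp: X_def)
    then have "is_tree X (induced_edges (induced_edges G (S - branch G v r1)) X)"
      using X.is_tree_left is_tree_minus_branch[OF t v r(1)] by simp
    then show ?thesis
      by (simp add: induced_edges_induced_edges X_def Diff_subset)
  qed
qed

context
  fixes S G r1 r2 r3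
  assumes t: "is_tree S G" and r: "r1 \<in> S" "r2 \<in> S" "r3 \<in> S"
begin

lemma split_at_median_eq:
  defines "v \<equiv> median G S r1 r2 r3"
  defines "X \<equiv> S - branch G v r1 - branch G v r2"
  shows "split_at_median S (G, r1, r2, r3) =
    ((X, induced_edges G X, Some (v, r3)), pendant G v r1, reverse_roots (pendant G v r2))"
  by (simp add: v_def X_def Let_def)

lemma split_at_median_components:
  defines "v \<equiv> median G S r1 r2 r3"
  defines "X \<equiv> S - branch G v r1 - branch G v r2"
  shows "doubly_rooted_tree (X, induced_edges G X, Some (v, r3))"
    and "doubly_rooted_tree (pendant G v r1)" "doubly_rooted_tree (reverse_roots (pendant G v r2))"
    and "is_composition X (branch G v r1) (branch G v r2) S" "X \<noteq> {}"
proof -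
  have m: "is_median G S r1 r2 r3 v"
    unfolding v_def by (rule is_median_median[OF t r])
  then have v: "v \<in> S"
    by (simp add: is_median_def)
  have "v \<in> X" "r3 \<in> X"
    using v center_notin_branch[OF t v] median_branches(2,3)[OF t r m] r
    by (auto simp: X_def)
  then show "X \<noteq> {}" "doubly_rooted_tree (X, induced_edges G X, Some (v, r3))"
    using is_tree_split_center[OF t r m] by (auto simp: X_def doubly_rooted_tree_def)
  show "doubly_rooted_tree (pendant G v r1)" "doubly_rooted_tree (reverse_roots (pendant G v r2))"
    using doubly_rooted_tree_pendant[OF t v] r by simp_all
  show "is_composition X (branch G v r1) (branch G v r2) S"
    using median_branches(1)[OF t r m] branch_subset[OF t v] r
    by (auto simp: X_def is_composition_def)
qed

lemma glue_split_at_median: "glue (split_at_median S (G, r1, r2, r3)) = (G, r1, r2, r3)"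
proof -
  define v where "v \<equiv> median G S r1 r2 r3"
  define X where "X \<equiv> S - branch G v r1 - branch G v r2"
  have v: "v \<in> S"
    using is_median_median[OF t r] by (simp add: v_def is_median_def)
  have "G = induced_edges G X \<union> hang_edges v (pendant G v r1) \<union> hang_edges v (pendant G v r2)"
  proof
    show "G \<subseteq> induced_edges G X \<union> hang_edges v (pendant G v r1) \<union> hang_edges v (pendant G v r2)"
      using edge_cases_branch[OF t v r(1)] edge_cases_branch[OF t v r(2)]
      by (auto simp: X_def induced_edges_def)
  qed (use hang_edges_pendant_subset[OF t v] r in \<open>auto simp: induced_edges_def\<close>)
  then show ?thesis
    by (simp add: split_at_median_eq v_def[symmetric] X_def[symmetric])
qed

end

lemma glue_in_T_inverse:
  assumes q: "q \<in> Q n"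
  shows "glue q \<in> T n \<and> split_at_median {1..n} (glue q) = q"
proof -
  obtain X E R D1 D2 where q_eq: "q = ((X, E, R), D1, D2)"
    by (cases q) auto
  obtain Y E1 R1 where D1: "D1 = (Y, E1, R1)"
    by (cases D1) auto
  obtain Z E2 R2 where D2: "reverse_roots D2 = (Z, E2, R2)"
    by (cases "reverse_roots D2") auto
  have "doubly_rooted_tree D2" "vertices D2 = Z"
    using q vertices_reverse_roots[of D2] by (auto simp: q_eq Q_def D2 vertices_def)
  then have drt: "doubly_rooted_tree (X, E, R)" "doubly_rooted_tree (Y, E1, R1)"
      "doubly_rooted_tree (Z, E2, R2)"
    and comp: "is_composition X Y Z {1..n}" and "X \<noteq> {}"
    using q doubly_rooted_tree_reverse_roots[of D2] by (auto simp: q_eq D1 D2 Q_def vertices_def)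
  then obtain a b where R: "R = Some (a, b)" and tX: "is_tree X E" and ab: "a \<in> X" "b \<in> X"
    by (auto elim: doubly_rooted_treeE)
  define G where "G = E \<union> hang_edges a (Y, E1, R1) \<union> hang_edges a (Z, E2, R2)"
  have disj: "X \<inter> Y = {}" "X \<inter> Z = {}" "Y \<inter> Z = {}" and S: "X \<union> Y \<union> Z = {1..n}"
    using comp by (auto simp: is_composition_def)
  note tree = glued_structure(1)[OF tX ab drt(2,3) disj G_def]
  note split = split_at_median_glued[OF tX ab drt(2,3) disj G_def]
  have glue_q: "glue q = (G, far_root a (Y, E1, R1), far_root a (Z, E2, R2), b)"
    by (simp add: q_eq R D1 D2 G_def)
  have "far_root a (Y, E1, R1) \<in> {1..n}" "far_root a (Z, E2, R2) \<in> {1..n}" "b \<in> {1..n}"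
    using far_root_mem[OF drt(2), of a] far_root_mem[OF drt(3), of a] ab S by auto
  then have "glue q \<in> T n"
    using tree S by (simp add: glue_q T_def)
  moreover have "reverse_roots (Z, E2, R2) = D2"
    using D2 reverse_roots_reverse_roots by metis
  then have "split_at_median {1..n} (glue q) = q"
    unfolding glue_q S[symmetric] split by (simp add: q_eq R D1)
  ultimately show ?thesis ..
qed

lemma split_at_median_in_Q_inverse:
  assumes "g \<in> T n"
  shows "split_at_median {1..n} g \<in> Q n \<and> glue (split_at_median {1..n} g) = g"
proof -
  obtain G r1 r2 r3 where g: "g = (G, r1, r2, r3)"
    by (cases g) auto
  have t: "is_tree {1..n} G" and r: "r1 \<in> {1..n}" "r2 \<in> {1..n}" "r3 \<in> {1..n}"
    using assms by (auto simp: g T_def)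
  note D = split_at_median_components[OF t r]
  have "split_at_median {1..n} g \<in> Q n"
    unfolding g split_at_median_eq[OF t r] using D by (simp add: Q_def)
  then show ?thesis
    using glue_split_at_median[OF t r] g by simp
qed

theorem theorem1:
  fixes n :: nat
  assumes "n \<ge> 1"
  shows "\<exists>f. bij_betw f (Q n) (T n)"
proof -
  have "bij_betw glue (Q n) (T n)"
    by (rule bij_betw_byWitness[where f' = "split_at_median {1..n}"])
      (use glue_in_T_inverse split_at_median_in_Q_inverse in blast)+
  then show ?thesis
    by blast
qed

end
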